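(* Let $\mathbf{A}$ be an $n\times n$ repeated-row matrix of type $\mathbf{m}=(m_1,\dots,m_t)$ with rows $\mathbf{a}_1,\dots,\mathbf{a}_t$, and let $\mu$ be the sum-product flow on $\mathcal{T}(\mathbf{A},\mathbf{m})$. For every vertex $\boldsymbol\lambda\ne\mathbf{0}$, let $j=\lambda_1+\dots+\lambda_t$, let $\mathbf{c}_\ell=(a_{\ell1},\dots,a_{\ell j})$ for $\ell\in[t]$, and let $\mathbf{C}(\boldsymbol\lambda)$ be the $j\times j$ matrix whose rows are $\mathbf{c}_1$ repeated $\lambda_1$ times, $\mathbf{c}_2$ repeated $\lambda_2$ times, …, $\mathbf{c}_t$ repeated $\lambda_t$ times. Then $$\mathrm{per}(\mathbf{C}(\boldsymbol\lambda))=\lambda_1!\lambda_2!\cdots\lambda_t!\,\mu(\boldsymbol\lambda).$$ In particular $\mathrm{per}(\mathbf{A})=m_1!m_2!\cdots m_t!\,\mu(\mathrm{toor})$.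
   Context: $\mathrm{per}(\mathbf{B})=\sum_{\boldsymbol\sigma\in\mathbb{S}_k}\prod_i b_{i\sigma_i}$ for a $k\times k$ matrix (invariant under row permutations). An $n\times n$ matrix $\mathbf{A}$ is a repeated-row matrix of type $\mathbf{m}=(m_1,\dots,m_t)$ (positive integers with $\sum m_\ell=n$) with rows $\mathbf{a}_1,\dots,\mathbf{a}_t$, $\mathbf{a}_\ell=(a_{\ell1},\dots,a_{\ell n})$, if its rows consist of $\mathbf{a}_\ell$ repeated exactly $m_\ell$ times for each $\ell$. The trellis $\mathcal{T}(\mathbf{A},\mathbf{m})$: vertices are integer tuples $\boldsymbol\lambda=(\lambda_1,\dots,\lambda_t)$ with $0\le\lambda_\ell\le m_\ell$; layer $V_j$ consists of those with $\sum_\ell\lambda_\ell=j$ (root $\mathbf{0}$, toor $\mathbf{m}$); for $j\in[n]$, $(\boldsymbol\mu,\boldsymbol\lambda)\in V_{j-1}\times V_j$ is an edge iff there is a unique $\ell^*$ with $\lambda_{\ell^*}=\mu_{\ell^*}+1$ and $\lambda_\ell=\mu_\ell$ for $\ell\ne\ell^*$; its label is $a_{\ell^* j}$. The sum-product flow: $\mu(\mathrm{root})=1$ and $\mu(v)=\sum_{(u,v)\in E}L(u,v)\mu(u)$ layer by layer. *)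

theory Defs
  imports "HOL-Combinatorics.Permutations"
begin

(* All indices are 1-based as in the paper: rows ell in {1..t}, columns/positions in {1..n}.
   A k x k matrix is a function nat => nat => 'a, read on {1..k} x {1..k}. *)

definition per :: "(nat \<Rightarrow> nat \<Rightarrow> 'a::comm_ring_1) \<Rightarrow> nat \<Rightarrow> 'a" where
  "per B k = (\<Sum>\<sigma> | \<sigma> permutes {1..k}. \<Prod>i=1..k. B i (\<sigma> i))"

definition repeated_row ::
  "(nat \<Rightarrow> nat \<Rightarrow> 'a) \<Rightarrow> nat \<Rightarrow> (nat \<Rightarrow> nat) \<Rightarrow> nat \<Rightarrow> (nat \<Rightarrow> nat \<Rightarrow> 'a) \<Rightarrow> bool" where
  "repeated_row A n m t a \<longleftrightarrow>
     (\<forall>l\<in>{1..t}. m l > 0) \<and> (\<Sum>l=1..t. m l) = n \<and>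
     (\<exists>g. (\<forall>i\<in>{1..n}. g i \<in> {1..t} \<and> (\<forall>c\<in>{1..n}. A i c = a (g i) c)) \<and>
          (\<forall>l\<in>{1..t}. card {i\<in>{1..n}. g i = l} = m l))"

definition trellis_vertices :: "(nat \<Rightarrow> nat) \<Rightarrow> nat \<Rightarrow> (nat \<Rightarrow> nat) set" where
  "trellis_vertices m t = {lam. (\<forall>l\<in>{1..t}. lam l \<le> m l) \<and> (\<forall>l. l \<notin> {1..t} \<longrightarrow> lam l = 0)}"

definition layer :: "(nat \<Rightarrow> nat) \<Rightarrow> nat \<Rightarrow> nat \<Rightarrow> (nat \<Rightarrow> nat) set" where
  "layer m t j = {lam \<in> trellis_vertices m t. (\<Sum>l=1..t. lam l) = j}"

definition root :: "nat \<Rightarrow> nat" where "root = (\<lambda>_. 0)"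

definition toor :: "(nat \<Rightarrow> nat) \<Rightarrow> nat \<Rightarrow> nat \<Rightarrow> nat" where
  "toor m t = (\<lambda>l. if l \<in> {1..t} then m l else 0)"

definition is_edge :: "(nat \<Rightarrow> nat) \<Rightarrow> nat \<Rightarrow> nat \<Rightarrow> (nat \<Rightarrow> nat) \<Rightarrow> (nat \<Rightarrow> nat) \<Rightarrow> bool" where
  "is_edge m t j u v \<longleftrightarrow> j \<ge> 1 \<and> u \<in> layer m t (j - 1) \<and> v \<in> layer m t j \<and>
     (\<exists>!l. l \<in> {1..t} \<and> v l = u l + 1 \<and> (\<forall>l'\<in>{1..t}. l' \<noteq> l \<longrightarrow> v l' = u l'))"

definition edge_index :: "nat \<Rightarrow> (nat \<Rightarrow> nat) \<Rightarrow> (nat \<Rightarrow> nat) \<Rightarrow> nat" where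
  "edge_index t u v = (THE l. l \<in> {1..t} \<and> v l = u l + 1 \<and> (\<forall>l'\<in>{1..t}. l' \<noteq> l \<longrightarrow> v l' = u l'))"

definition edge_label :: "(nat \<Rightarrow> nat \<Rightarrow> 'a) \<Rightarrow> nat \<Rightarrow> nat \<Rightarrow> (nat \<Rightarrow> nat) \<Rightarrow> (nat \<Rightarrow> nat) \<Rightarrow> 'a" where
  "edge_label a t j u v = a (edge_index t u v) j"

fun flow_layer :: "(nat \<Rightarrow> nat \<Rightarrow> 'a::comm_ring_1) \<Rightarrow> (nat \<Rightarrow> nat) \<Rightarrow> nat \<Rightarrow> nat \<Rightarrow> (nat \<Rightarrow> nat) \<Rightarrow> 'a" where
  "flow_layer a m t 0 v = (if v = root then 1 else 0)"
| "flow_layer a m t (Suc j) v =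
     (\<Sum>u \<in> {u. is_edge m t (Suc j) u v}. edge_label a t (Suc j) u v * flow_layer a m t j u)"

definition flow :: "(nat \<Rightarrow> nat \<Rightarrow> 'a::comm_ring_1) \<Rightarrow> (nat \<Rightarrow> nat) \<Rightarrow> nat \<Rightarrow> (nat \<Rightarrow> nat) \<Rightarrow> 'a" where
  "flow a m t v = flow_layer a m t (\<Sum>l=1..t. v l) v"

definition block_of :: "(nat \<Rightarrow> nat) \<Rightarrow> nat \<Rightarrow> nat" where
  "block_of lam r = (LEAST l. r \<le> (\<Sum>i=1..l. lam i))"

definition Cmat :: "(nat \<Rightarrow> nat \<Rightarrow> 'a) \<Rightarrow> (nat \<Rightarrow> nat) \<Rightarrow> nat \<Rightarrow> nat \<Rightarrow> 'a" where
  "Cmat a lam r c = a (block_of lam r) c"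

end

theory Submission
  imports Defs
begin

text \<open>Expanding the permanent along its last column, row \<open>b\<close> is matched with column \<open>j\<close>
  and the remaining minor again has repeated rows, of the type obtained by decreasing the
  multiplicity of the row type of \<open>b\<close> by one. Grouping the \<open>j\<close> terms by row type gives
  \<open>per C(\<lambda>) = \<Sum>\<^sub>\<ell> \<lambda>\<^sub>\<ell> a\<^sub>\<ell>\<^sub>j per C(\<lambda> - e\<^sub>\<ell>)\<close>, while the predecessors of \<open>\<lambda>\<close> in the trellis are
  exactly the \<open>\<lambda> - e\<^sub>\<ell>\<close> with \<open>\<lambda>\<^sub>\<ell> > 0\<close>. Since \<open>\<lambda>\<^sub>\<ell> (\<lambda> - e\<^sub>\<ell>)! = \<lambda>!\<close>, the quantity
  \<open>per C(\<lambda>) / \<lambda>!\<close> satisfies the recursion of the sum-product flow, by induction on the layer.\<close>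

definition rows_per :: "(nat \<Rightarrow> nat \<Rightarrow> 'a::comm_ring_1) \<Rightarrow> (nat \<Rightarrow> nat) \<Rightarrow> nat \<Rightarrow> 'a" where
  "rows_per a g j = (\<Sum>\<tau> | \<tau> permutes {1..j}. \<Prod>c=1..j. a (g (\<tau> c)) c)"

definition row_count :: "(nat \<Rightarrow> nat) \<Rightarrow> nat \<Rightarrow> nat \<Rightarrow> nat" where
  "row_count g j l = card {i\<in>{1..j}. g i = l}"

lemma per_eq_rows_per:
  assumes "\<forall>i\<in>{1..j}. \<forall>c\<in>{1..j}. B i c = a (g i) c"
  shows "per B j = rows_per a g j"
proof -
  have "per B j = (\<Sum>\<sigma> | \<sigma> permutes {1..j}. \<Prod>c=1..j. a (g (inv \<sigma> c)) c)"
    unfolding per_def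
  proof (rule sum.cong[OF refl])
    fix \<sigma> assume "\<sigma> \<in> {\<sigma>. \<sigma> permutes {1..j}}"
    then have \<sigma>: "\<sigma> permutes {1..j}" by simp
    have "(\<Prod>i=1..j. B i (\<sigma> i)) = (\<Prod>i=1..j. a (g (inv \<sigma> (\<sigma> i))) (\<sigma> i))"
      using assms permutes_in_image[OF \<sigma>] permutes_inverses(2)[OF \<sigma>] by (intro prod.cong) auto
    also have "\<dots> = (\<Prod>c=1..j. a (g (inv \<sigma> c)) c)"
      by (rule prod.reindex_bij_betw[OF permutes_imp_bij[OF \<sigma>]])
    finally show "(\<Prod>i=1..j. B i (\<sigma> i)) = (\<Prod>c=1..j. a (g (inv \<sigma> c)) c)" .
  qed
  also have "\<dots> = rows_per a g j"
    unfolding rows_per_def by (rule sum_permutations_inverse[symmetric])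
  finally show ?thesis .
qed

lemma rows_per_0 [simp]: "rows_per a g 0 = 1"
  unfolding rows_per_def by (simp add: permutes_empty)

lemma rows_per_Suc:
  "rows_per a g (Suc j) =
     (\<Sum>b\<in>{1..Suc j}. a (g b) (Suc j) * rows_per a (g \<circ> transpose (Suc j) b) j)"
proof -
  have ins: "{1..Suc j} = insert (Suc j) {1..j}" by auto
  have "rows_per a g (Suc j) = (\<Sum>b\<in>insert (Suc j) {1..j}. \<Sum>q | q permutes {1..j}.
          \<Prod>c=1..Suc j. a (g ((transpose (Suc j) b \<circ> q) c)) c)"
    unfolding rows_per_def ins by (rule sum_over_permutations_insert) auto
  also have "\<dots> = (\<Sum>b\<in>{1..Suc j}. \<Sum>q | q permutes {1..j}.
          a (g b) (Suc j) * (\<Prod>c=1..j. a ((g \<circ> transpose (Suc j) b) (q c)) c))"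
  proof (rule sum.cong[OF ins[symmetric]], rule sum.cong[OF refl])
    fix b q assume "q \<in> {q. q permutes {1..j}}"
    then have "q (Suc j) = Suc j" by (simp add: permutes_def)
    then show "(\<Prod>c=1..Suc j. a (g ((transpose (Suc j) b \<circ> q) c)) c) =
          a (g b) (Suc j) * (\<Prod>c=1..j. a ((g \<circ> transpose (Suc j) b) (q c)) c)"
      by (simp add: prod.cl_ivl_Suc mult.commute)
  qed
  also have "\<dots> = (\<Sum>b\<in>{1..Suc j}. a (g b) (Suc j) * rows_per a (g \<circ> transpose (Suc j) b) j)"
    unfolding rows_per_def by (simp add: sum_distrib_left)
  finally show ?thesis .
qed

lemma row_count_transpose:
  assumes b: "b \<in> {1..Suc j}"
  shows "row_count (g \<circ> transpose (Suc j) b) j l = row_count g (Suc j) l - (if g b = l then 1 else 0)"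
proof -
  let ?t = "transpose (Suc j) b"
  have "?t permutes {1..Suc j}" using b by (auto intro: permutes_swap_id)
  then have "?t ` {1..Suc j} = {1..Suc j}" by (rule permutes_image)
  moreover have "{1..j} = {1..Suc j} - {Suc j}" by auto
  ultimately have image: "?t ` {1..j} = {1..Suc j} - {b}"
    using image_set_diff[of ?t "{1..Suc j}" "{Suc j}"] by simp
  have "card {i\<in>{1..j}. g (?t i) = l} = card (?t ` {i\<in>{1..j}. g (?t i) = l})"
    by (rule card_image[symmetric]) (rule inj_on_subset[of ?t UNIV], simp_all)
  also have "?t ` {i\<in>{1..j}. g (?t i) = l} = {k\<in>?t ` {1..j}. g k = l}"
    by blast
  also have "\<dots> = {k\<in>{1..Suc j}. g k = l} - {b}"
    unfolding image by blast
  finally show ?thesis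
    unfolding row_count_def using b by (simp add: card_Diff_singleton_if)
qed

lemma sum_by_row_count:
  fixes h :: "nat \<Rightarrow> 'a::comm_semiring_1"
  assumes "\<forall>i\<in>{1..j}. g i \<in> {1..t}"
  shows "(\<Sum>r=1..j. h (g r)) = (\<Sum>l=1..t. of_nat (row_count g j l) * h l)"
proof -
  have "(\<Sum>r=1..j. h (g r)) = (\<Sum>l=1..t. \<Sum>r\<in>{i\<in>{1..j}. g i = l}. h (g r))"
    by (rule sum.group[symmetric]) (use assms in auto)
  also have "\<dots> = (\<Sum>l=1..t. of_nat (row_count g j l) * h l)"
    unfolding row_count_def by (rule sum.cong) auto
  finally show ?thesis .
qed

lemma sum_row_count:
  assumes "\<forall>i\<in>{1..j}. g i \<in> {1..t}"
  shows "(\<Sum>l=1..t. row_count g j l) = j"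
  using sum_by_row_count[OF assms, of "\<lambda>_. 1::nat"] by simp

lemma decrement_in_trellis_vertices:
  assumes "lam \<in> trellis_vertices m t"
  shows "lam(l := lam l - 1) \<in> trellis_vertices m t"
  using assms unfolding trellis_vertices_def by (auto intro: le_trans[OF diff_le_self])

lemma decrement_in_layer:
  assumes v: "v \<in> layer m t (Suc j)" and l: "l \<in> {1..t}" "0 < v l"
  shows "v(l := v l - 1) \<in> layer m t j"
proof -
  have "(\<Sum>k=1..t. (v(l := v l - 1)) k) = (v l - 1) + (\<Sum>k\<in>{1..t}-{l}. v k)"
    using l by (simp add: sum.remove)
  also have "\<dots> = (\<Sum>k=1..t. v k) - 1"
    using l by (simp add: sum.remove)
  finally have "(\<Sum>k=1..t. (v(l := v l - 1)) k) = j"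
    using v unfolding layer_def by simp
  moreover have "v(l := v l - 1) \<in> trellis_vertices m t"
    using v decrement_in_trellis_vertices unfolding layer_def by blast
  ultimately show ?thesis unfolding layer_def by blast
qed

lemma predecessors_eq:
  assumes v: "v \<in> layer m t (Suc j)"
  shows "{u. is_edge m t (Suc j) u v} = (\<lambda>l. v(l := v l - 1)) ` {l\<in>{1..t}. 0 < v l}"
    and "l \<in> {1..t} \<Longrightarrow> 0 < v l \<Longrightarrow> edge_index t (v(l := v l - 1)) v = l"
proof -
  have v0: "\<forall>k. k \<notin> {1..t} \<longrightarrow> v k = 0"
    using v unfolding layer_def trellis_vertices_def by auto
  have uniq: "(l' \<in> {1..t} \<and> v l' = (v(l := v l - 1)) l' + 1 \<and>
        (\<forall>l''\<in>{1..t}. l'' \<noteq> l' \<longrightarrow> v l'' = (v(l := v l - 1)) l'')) \<longleftrightarrow> l' = l"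
    if "l \<in> {1..t}" "0 < v l" for l l'
    using that by auto
  then show "l \<in> {1..t} \<Longrightarrow> 0 < v l \<Longrightarrow> edge_index t (v(l := v l - 1)) v = l"
    unfolding edge_index_def by simp
  show "{u. is_edge m t (Suc j) u v} = (\<lambda>l. v(l := v l - 1)) ` {l\<in>{1..t}. 0 < v l}"
  proof (intro set_eqI iffI)
    fix u assume "u \<in> {u. is_edge m t (Suc j) u v}"
    then have e: "is_edge m t (Suc j) u v" by simp
    then obtain l where l: "l \<in> {1..t}" "v l = u l + 1" "\<forall>l'\<in>{1..t}. l' \<noteq> l \<longrightarrow> v l' = u l'"
      unfolding is_edge_def by auto
    have "\<forall>k. k \<notin> {1..t} \<longrightarrow> u k = 0"
      using e unfolding is_edge_def layer_def trellis_vertices_def by auto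
    then have "u = v(l := v l - 1)"
      using l v0 by (intro ext) (auto simp: atLeastAtMost_iff)
    then show "u \<in> (\<lambda>l. v(l := v l - 1)) ` {l\<in>{1..t}. 0 < v l}"
      using l by (intro rev_image_eqI[of l]) auto
  next
    fix u assume "u \<in> (\<lambda>l. v(l := v l - 1)) ` {l\<in>{1..t}. 0 < v l}"
    then obtain l where l: "l \<in> {1..t}" "0 < v l" and u: "u = v(l := v l - 1)" by auto
    have "\<exists>!l'. l' \<in> {1..t} \<and> v l' = u l' + 1 \<and> (\<forall>l''\<in>{1..t}. l'' \<noteq> l' \<longrightarrow> v l'' = u l'')"
      unfolding u uniq[OF l] by simp
    then show "u \<in> {u. is_edge m t (Suc j) u v}"
      using decrement_in_layer[OF v l] v unfolding is_edge_def u by simp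
  qed
qed

lemma flow_layer_Suc_eq:
  assumes v: "v \<in> layer m t (Suc j)"
  shows "flow_layer a m t (Suc j) v =
    (\<Sum>l\<in>{l\<in>{1..t}. 0 < v l}. a l (Suc j) * flow_layer a m t j (v(l := v l - 1)))"
proof -
  have "inj_on (\<lambda>l. v(l := v l - 1)) {l\<in>{1..t}. 0 < v l}"
  proof (rule inj_onI, rule ccontr)
    fix x y assume x: "x \<in> {l\<in>{1..t}. 0 < v l}" and eq: "v(x := v x - 1) = v(y := v y - 1)" and "x \<noteq> y"
    then have "(v(y := v y - 1)) x = v x" by simp
    then show False using x fun_cong[OF eq, of x] by auto
  qed
  then show ?thesis
    using predecessors_eq[OF v] by (simp add: sum.reindex edge_label_def)
qed

lemma fact_prod_decrement:
  fixes lam :: "nat \<Rightarrow> nat"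
  assumes l: "l \<in> {1..t}" and pos: "0 < lam l"
  shows "lam l * (\<Prod>k=1..t. fact ((lam(l := lam l - 1)) k)) = (\<Prod>k=1..t. fact (lam k) :: nat)"
proof -
  define P where "P = (\<Prod>k\<in>{1..t}-{l}. fact (lam k) :: nat)"
  have "(\<Prod>k\<in>{1..t}-{l}. fact ((lam(l := lam l - 1)) k)) = P"
    unfolding P_def by (rule prod.cong) auto
  then have "lam l * (\<Prod>k=1..t. fact ((lam(l := lam l - 1)) k)) = (lam l * fact (lam l - 1)) * P"
    using l by (simp add: prod.remove)
  also have "lam l * fact (lam l - 1) = (fact (lam l) :: nat)"
    by (subst fact_reduce[OF pos]) simp
  also have "fact (lam l) * P = (\<Prod>k=1..t. fact (lam k))"
    unfolding P_def using l by (simp add: prod.remove)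
  finally show ?thesis .
qed

lemma rows_per_eq_flow_layer:
  assumes "\<forall>i\<in>{1..j}. g i \<in> {1..t}" and "lam \<in> trellis_vertices m t"
    and "\<forall>l\<in>{1..t}. row_count g j l = lam l"
  shows "rows_per a g j = of_nat (\<Prod>l=1..t. fact (lam l)) * flow_layer a m t j lam"
  using assms
proof (induction j arbitrary: g lam)
  case 0
  then have "lam = root"
    unfolding trellis_vertices_def root_def row_count_def by (auto intro!: ext)
  then show ?case by (simp add: root_def)
next
  case (Suc j)
  note g = Suc.prems(1) and lam = Suc.prems(2) and count = Suc.prems(3)
  define lam' where "lam' l = lam(l := lam l - 1)" for l
  define H where "H l = a l (Suc j) * (of_nat (\<Prod>k=1..t. fact (lam' l k)) * flow_layer a m t j (lam' l))" for l
  have minor: "rows_per a (g \<circ> transpose (Suc j) b) j = of_nat (\<Prod>k=1..t. fact (lam' (g b) k)) *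
      flow_layer a m t j (lam' (g b))" if b: "b \<in> {1..Suc j}" for b
  proof (rule Suc.IH)
    have "transpose (Suc j) b permutes {1..Suc j}" using b by (auto intro: permutes_swap_id)
    then show "\<forall>i\<in>{1..j}. (g \<circ> transpose (Suc j) b) i \<in> {1..t}"
      using g permutes_in_image by fastforce
    show "lam' (g b) \<in> trellis_vertices m t"
      unfolding lam'_def by (rule decrement_in_trellis_vertices[OF lam])
    show "\<forall>l\<in>{1..t}. row_count (g \<circ> transpose (Suc j) b) j l = lam' (g b) l"
      using row_count_transpose[OF b] count unfolding lam'_def by auto
  qed
  have "lam \<in> layer m t (Suc j)"
    using sum_row_count[OF g] count lam unfolding layer_def by simp
  note flow_step = flow_layer_Suc_eq[OF this]
  have "rows_per a g (Suc j) = (\<Sum>b=1..Suc j. H (g b))"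
    unfolding rows_per_Suc H_def by (rule sum.cong) (auto simp: minor)
  also have "\<dots> = (\<Sum>l=1..t. of_nat (lam l) * H l)"
    using sum_by_row_count[OF g, of H] count by simp
  also have "\<dots> = (\<Sum>l\<in>{l\<in>{1..t}. 0 < lam l}. of_nat (lam l) * H l)"
    by (rule sum.mono_neutral_right) auto
  also have "\<dots> = (\<Sum>l\<in>{l\<in>{1..t}. 0 < lam l}. of_nat (\<Prod>l=1..t. fact (lam l)) *
        (a l (Suc j) * flow_layer a m t j (lam' l)))"
  proof (rule sum.cong[OF refl])
    fix l assume "l \<in> {l\<in>{1..t}. 0 < lam l}"
    then have "lam l * (\<Prod>k=1..t. fact (lam' l k)) = (\<Prod>l=1..t. fact (lam l))"
      unfolding lam'_def by (intro fact_prod_decrement) auto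
    then have "(of_nat (lam l) * of_nat (\<Prod>k=1..t. fact (lam' l k)) :: 'a) = of_nat (\<Prod>l=1..t. fact (lam l))"
      by (simp only: of_nat_mult[symmetric])
    moreover have "of_nat (lam l) * H l = (of_nat (lam l) * of_nat (\<Prod>k=1..t. fact (lam' l k))) *
        (a l (Suc j) * flow_layer a m t j (lam' l))"
      unfolding H_def by (simp only: ac_simps)
    ultimately show "of_nat (lam l) * H l = of_nat (\<Prod>l=1..t. fact (lam l)) *
        (a l (Suc j) * flow_layer a m t j (lam' l))"
      by simp
  qed
  also have "\<dots> = of_nat (\<Prod>l=1..t. fact (lam l)) * flow_layer a m t (Suc j) lam"
    unfolding flow_step lam'_def by (simp only: sum_distrib_left)
  finally show ?case .
qed

lemma block_of_le:
  fixes lam :: "nat \<Rightarrow> nat"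
  assumes "r \<le> sum lam {1..t}"
  shows "r \<le> sum lam {1..block_of lam r}" and "block_of lam r \<le> t"
  unfolding block_of_def using assms by (fact LeastI, fact Least_le)

lemma block_of_mem:
  fixes lam :: "nat \<Rightarrow> nat"
  assumes "1 \<le> r" "r \<le> sum lam {1..t}"
  shows "block_of lam r \<in> {1..t}"
  using block_of_le[OF assms(2)] assms(1) by (cases "block_of lam r") auto

lemma block_of_eq_iff:
  fixes lam :: "nat \<Rightarrow> nat"
  assumes "r \<le> sum lam {1..t}" "1 \<le> l"
  shows "block_of lam r = l \<longleftrightarrow> sum lam {1..l-1} < r \<and> r \<le> sum lam {1..l}"
proof
  assume bl: "block_of lam r = l"
  have "\<not> r \<le> sum lam {1..l-1}"
    using Least_le[of "\<lambda>l. r \<le> sum lam {1..l}" "l - 1"] bl assms(2)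
    unfolding block_of_def by auto
  then show "sum lam {1..l-1} < r \<and> r \<le> sum lam {1..l}"
    using block_of_le(1)[OF assms(1)] bl by simp
next
  assume r: "sum lam {1..l-1} < r \<and> r \<le> sum lam {1..l}"
  have below: "sum lam {1..y} \<le> sum lam {1..l-1}" if "y < l" for y
    using that by (intro sum_mono2) auto
  show "block_of lam r = l"
    unfolding block_of_def
  proof (rule Least_equality)
    show "r \<le> sum lam {1..l}" using r by simp
    fix y assume "r \<le> sum lam {1..y}"
    then show "l \<le> y" using below r by (meson le_trans not_le)
  qed
qed

lemma row_count_block_of:
  fixes lam :: "nat \<Rightarrow> nat"
  assumes l: "l \<in> {1..t}"
  shows "row_count (block_of lam) (sum lam {1..t}) l = lam l"
proof -
  have split: "sum lam {1..l} = sum lam {1..l-1} + lam l"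
    using l by (cases l) (auto simp: sum.cl_ivl_Suc)
  have "sum lam {1..l} \<le> sum lam {1..t}" using l by (intro sum_mono2) auto
  then have "{i\<in>{1..sum lam {1..t}}. block_of lam i = l} = {sum lam {1..l-1}<..sum lam {1..l}}"
    using block_of_eq_iff[of _ lam t l] l by (intro set_eqI iffI) auto
  then show ?thesis unfolding row_count_def using split by simp
qed

theorem theorem5:
  fixes A a :: "nat \<Rightarrow> nat \<Rightarrow> 'a::comm_ring_1"
    and m :: "nat \<Rightarrow> nat" and n t :: nat
  assumes "repeated_row A n m t a"
  shows "(\<forall>lam \<in> trellis_vertices m t. lam \<noteq> root \<longrightarrow>
            per (Cmat a lam) (\<Sum>l=1..t. lam l)
              = of_nat (\<Prod>l=1..t. fact (lam l)) * flow a m t lam)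
       \<and> per A n = of_nat (\<Prod>l=1..t. fact (m l)) * flow a m t (toor m t)"
proof
  show "\<forall>lam \<in> trellis_vertices m t. lam \<noteq> root \<longrightarrow>
            per (Cmat a lam) (\<Sum>l=1..t. lam l)
              = of_nat (\<Prod>l=1..t. fact (lam l)) * flow a m t lam"
  proof (intro ballI impI)
    \<comment> \<open>The identity also holds at the root, where both sides are 1.\<close>
    fix lam assume lam: "lam \<in> trellis_vertices m t"
    have "per (Cmat a lam) (\<Sum>l=1..t. lam l) = rows_per a (block_of lam) (\<Sum>l=1..t. lam l)"
      by (rule per_eq_rows_per) (simp add: Cmat_def)
    also have "\<dots> = of_nat (\<Prod>l=1..t. fact (lam l)) * flow a m t lam"
      unfolding flow_def using lam block_of_mem row_count_block_of
      by (intro rows_per_eq_flow_layer) auto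
    finally show "per (Cmat a lam) (\<Sum>l=1..t. lam l) = of_nat (\<Prod>l=1..t. fact (lam l)) * flow a m t lam" .
  qed
next
  from assms obtain g where g: "\<forall>i\<in>{1..n}. g i \<in> {1..t} \<and> (\<forall>c\<in>{1..n}. A i c = a (g i) c)"
    and count: "\<forall>l\<in>{1..t}. card {i\<in>{1..n}. g i = l} = m l" and n: "(\<Sum>l=1..t. m l) = n"
    unfolding repeated_row_def by blast
  have toor: "toor m t \<in> trellis_vertices m t" "\<forall>l\<in>{1..t}. toor m t l = m l"
    unfolding trellis_vertices_def toor_def by auto
  have "per A n = rows_per a g n" by (rule per_eq_rows_per) (use g in blast)
  also have "\<dots> = of_nat (\<Prod>l=1..t. fact (toor m t l)) * flow_layer a m t n (toor m t)"
    using g count toor by (intro rows_per_eq_flow_layer) (auto simp: row_count_def)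
  also have "\<dots> = of_nat (\<Prod>l=1..t. fact (m l)) * flow a m t (toor m t)"
    using toor(2) n unfolding flow_def by simp
  finally show "per A n = of_nat (\<Prod>l=1..t. fact (m l)) * flow a m t (toor m t)" .
qed

end
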